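(* For $n\ge 0$ let $\Theta_n=\{\theta\in\mathcal{I}_n\cap\mathcal{L}: |\theta|\text{ is minimal}\}$. Then $\Theta_n=\{f^{(n)}\}$ if $n$ is odd, and $\Theta_n=\{f^{(n)},\,f^{(n)}+g^{(n)}\}$ if $n$ is even.
   Context: $\mathbb{F}=\mathrm{GF}(2)$, $R=\mathbb{F}[x,z]$, $|\cdot|$ is total degree. $M=\mathbb{F}[x^{-1},z^{-1}]$ is an $R$-module via $x^pz^q\circ x^{-u}z^{-v}=x^{p-u}z^{q-v}$ if $p\le u,q\le v$ and $0$ otherwise, extended bilinearly; $\mathcal{I}_F=\{\varphi\in R:\varphi\circ F=0\}$. $\mathcal{L}$ is the set of non-zero forms $\varphi\in R$ whose coefficient of $x^{|\varphi|}$ equals $1$. Let $(r_0,r_1,\ldots)$ be the binary sequence with $r_i=1$ if $i=2^j-1$ for some $j\ge 0$ and $r_i=0$ otherwise. For $n\ge0$, $R^{(-n)}=\sum_{j=-n}^{0}r_{-j}\,x^{j}z^{-n-j}$ and $\mathcal{I}_n=\mathcal{I}_{R^{(-n)}}$. For a form $f\in R$ and homogeneous $G\in M$, $\Delta(f;G)$ is the coefficient of $x^{|f|+|G|}z^0$ in $f\cdot G$ computed in $\mathbb{F}[x^{\pm1},z^{\pm1}]$ if $|f|+|G|\le 0$, and $0$ otherwise. Define forms recursively: $(f^{(0)},g^{(0)})=(x+z,z)$; for $k\ge0$ let $d_k=|g^{(k)}|-|f^{(k)}|$ and $\Delta_k=\Delta(f^{(k)};R^{(-1-k)})$, and set $(f^{(k+1)},g^{(k+1)})=(f^{(k)},zg^{(k)})$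 if $\Delta_k=0$; $=(f^{(k)}+x^{-d_k}g^{(k)},\,zg^{(k)})$ if $\Delta_k=1$ and $d_k\le0$; $=(x^{d_k}f^{(k)}+g^{(k)},\,zf^{(k)})$ if $\Delta_k=1$ and $d_k>0$. *)

theory Defs
  imports Main
begin

text \<open>Polynomials over GF(2) in two variables x, z are represented by their (finite)
  set of monomials with coefficient 1: (p,q) stands for x^p z^q.
  Elements of M = F[x^-1,z^-1] are likewise finite sets, (u,v) standing for x^-u z^-v.\<close>

type_synonym poly2 = "(nat \<times> nat) set"

definition padd :: "poly2 \<Rightarrow> poly2 \<Rightarrow> poly2" where
  "padd A B = (A - B) \<union> (B - A)"

definition xshift :: "nat \<Rightarrow> poly2 \<Rightarrow> poly2" where
  "xshift a A = (\<lambda>(p,q). (p + a, q)) ` A"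

definition zshift :: "nat \<Rightarrow> poly2 \<Rightarrow> poly2" where
  "zshift a A = (\<lambda>(p,q). (p, q + a)) ` A"

definition is_form :: "poly2 \<Rightarrow> bool" where
  "is_form A \<longleftrightarrow> finite A \<and> (\<exists>d. \<forall>(p,q)\<in>A. p + q = d)"

text \<open>Total degree of a nonzero form (for elements of M: minus the degree).\<close>
definition tdeg :: "poly2 \<Rightarrow> nat" where
  "tdeg A = Max ((\<lambda>(p,q). p + q) ` A)"

text \<open>The module action of R on M.\<close>
definition act :: "poly2 \<Rightarrow> poly2 \<Rightarrow> poly2" where
  "act \<phi> F = {(a,b). odd (card {(m,w) \<in> \<phi> \<times> F.
      fst m \<le> fst w \<and> snd m \<le> snd w \<and> fst w - fst m = a \<and> snd w - snd m = b})}"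

definition annih :: "poly2 \<Rightarrow> poly2 set" where
  "annih F = {\<phi>. finite \<phi> \<and> act \<phi> F = {}}"

definition Lset :: "poly2 set" where
  "Lset = {\<phi>. is_form \<phi> \<and> \<phi> \<noteq> {} \<and> (tdeg \<phi>, 0) \<in> \<phi>}"

definition rseq :: "nat \<Rightarrow> bool" where
  "rseq i \<longleftrightarrow> (\<exists>j. i = 2 ^ j - 1)"

definition Rn :: "nat \<Rightarrow> poly2" where
  "Rn n = {(i, n - i) | i. i \<le> n \<and> rseq i}"

definition In :: "nat \<Rightarrow> poly2 set" where
  "In n = annih (Rn n)"

text \<open>Coefficient of x^a z^b in the Laurent product f * G, f in R, G in M.\<close>
definition laurent_coeff :: "poly2 \<Rightarrow> poly2 \<Rightarrow> int \<Rightarrow> int \<Rightarrow> bool" where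
  "laurent_coeff f G a b = odd (card {(m,w) \<in> f \<times> G.
      int (fst m) - int (fst w) = a \<and> int (snd m) - int (snd w) = b})"

text \<open>Delta(f;G), with |G| = - tdeg G.\<close>
definition Delta :: "poly2 \<Rightarrow> poly2 \<Rightarrow> bool" where
  "Delta f G = (if int (tdeg f) - int (tdeg G) \<le> 0
                then laurent_coeff f G (int (tdeg f) - int (tdeg G)) 0 else False)"

fun fg :: "nat \<Rightarrow> poly2 \<times> poly2" where
  "fg 0 = ({(1,0),(0,1)}, {(0,1)})"
| "fg (Suc k) = (let (f, g) = fg k; d = int (tdeg g) - int (tdeg f) in
      if \<not> Delta f (Rn (Suc k)) then (f, zshift 1 g)
      else if d \<le> 0 then (padd f (xshift (nat (- d)) g), zshift 1 g)
      else (padd (xshift (nat d) f) g, zshift 1 f))"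

definition Theta :: "nat \<Rightarrow> poly2 set" where
  "Theta n = {\<theta> \<in> In n \<inter> Lset. \<forall>\<theta>' \<in> In n \<inter> Lset. tdeg \<theta> \<le> tdeg \<theta>'}"

end

theory Submission
  imports Defs "HOL-Library.Z2" "HOL-Computational_Algebra.Formal_Power_Series"
begin

text \<open>A form \<open>\<theta>\<close> of degree \<open>d\<close> in \<open>\<L>\<close> is determined by \<open>C(X) = \<theta>(1, X)\<close>, a polynomial
  over GF(2) with \<open>C(0) = 1\<close> and \<open>deg C \<le> d\<close>; and \<open>\<theta> \<in> \<I>\<^sub>n\<close> says that the coefficients of
  \<open>X\<^sup>d, \<dots>, X\<^sup>n\<close> in \<open>C R\<close> vanish, where \<open>R = \<Sum> r\<^sub>i X\<^sup>i\<close>. Since \<open>r\<^sub>2\<^sub>k\<^sub>+\<^sub>1 = r\<^sub>k\<close> and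
  \<open>r\<^sub>2\<^sub>k\<^sub>+\<^sub>2 = 0\<close>, \<open>R\<close> is the root of \<open>X R\<^sup>2 + R + 1 = 0\<close>. The denominators \<open>P\<^sub>k\<close> of its Pade
  approximants (\<open>P\<^sub>k\<^sub>+\<^sub>2 = P\<^sub>k\<^sub>+\<^sub>1 + X\<^sup>2 P\<^sub>k\<close>) have degree \<open>k\<close>, and the coefficients of
  \<open>P\<^sub>k R\<close> in degrees \<open>k, \<dots>, 2k\<close> are \<open>0, \<dots>, 0, 1\<close>; so \<open>P\<^sub>\<lfloor>\<^sub>n\<^sub>/\<^sub>2\<^sub>\<rfloor>\<^sub>+\<^sub>1\<close> annihilates.
  Conversely, the difference of two annihilators of degree \<open>d\<close>, divided by its lowest power
  of \<open>X\<close>, is an annihilator for a shorter window. Induction on \<open>n\<close> then gives \<open>d > \<lfloor>n/2\<rfloor>\<close>,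
  uniqueness for odd \<open>n\<close>, and exactly the two solutions \<open>P\<^sub>m\<^sub>+\<^sub>1\<close> and \<open>P\<^sub>m\<^sub>+\<^sub>1 + X P\<^sub>m\<close> for
  \<open>n = 2m\<close>. Finally, the recursion for \<open>(f\<^sup>(\<^sup>k\<^sup>), g\<^sup>(\<^sup>k\<^sup>))\<close> produces the homogenisations of
  \<open>P\<^sub>m\<^sub>+\<^sub>1\<close> and \<open>X P\<^sub>m\<close>.\<close>

unbundle fps_syntax

section \<open>Power series over GF(2)\<close>

lemma bit_add_self: "(a::bit) + a = 0"
  by simp

lemma fps_bit_add_self [simp]: "(f::bit fps) + f = 0"
  by (rule fps_ext) (simp only: fps_add_nth bit_add_self fps_zero_nth)

lemma fps_bit_two [simp]: "(2::bit fps) = 0"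
  by (rule fps_ext) (simp add: numeral_fps_const)

lemma of_nat_bit_eq_1_iff: "(of_nat n :: bit) = 1 \<longleftrightarrow> odd n"
  by (induction n) auto

lemma sum_bit_symmetric:
  fixes h :: "nat \<Rightarrow> bit"
  assumes sym: "\<And>i. i \<le> n \<Longrightarrow> h i = h (n - i)"
  shows "(\<Sum>i=0..n. h i) = (if even n then h (n div 2) else 0)"
proof -
  define A where "A = {i. 2*i < n}"
  define B where "B = {i. i \<le> n \<and> 2*i > n}"
  define M where "M = {i. 2*i = n}"
  have fin: "finite A" "finite B" "finite M"
    unfolding A_def B_def M_def by (auto intro: finite_subset[of _ "{..n}"])
  have "{0..n} = A \<union> (B \<union> M)" "B \<inter> M = {}" "A \<inter> (B \<union> M) = {}"
    unfolding A_def B_def M_def by auto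
  then have "(\<Sum>i=0..n. h i) = sum h A + (sum h B + sum h M)"
    using fin by (simp add: sum.union_disjoint)
  moreover have "sum h A = sum h B"
    by (rule sum.reindex_bij_witness[of A "\<lambda>i. n - i" "\<lambda>i. n - i"])
       (auto simp: A_def B_def intro: sym[symmetric])
  moreover have "sum h M = (if even n then h (n div 2) else 0)"
  proof -
    have "M = (if even n then {n div 2} else {})"
      unfolding M_def by auto
    then show ?thesis by simp
  qed
  ultimately show ?thesis
    by (metis add.assoc bit_add_self add_0)
qed

lemma fps_bit_square_nth: "((f::bit fps)^2) $ n = (if even n then f $ (n div 2) else 0)"
proof -
  have "(f^2) $ n = (\<Sum>i=0..n. f $ i * f $ (n - i))"
    by (simp add: power2_eq_square fps_mult_nth)
  also have "\<dots> = (if even n then f $ (n div 2) * f $ (n - n div 2) else 0)"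
    by (rule sum_bit_symmetric) (simp add: mult.commute)
  also have "\<dots> = (if even n then f $ (n div 2) else 0)"
    by (auto elim!: evenE)
  finally show ?thesis .
qed

section \<open>The generating series of r\<close>

lemma rseq_iff_power: "rseq i \<longleftrightarrow> (\<exists>j. Suc i = 2 ^ j)"
  unfolding rseq_def by (metis Suc_diff_1 diff_Suc_1 nat_zero_less_power_iff pos2)

lemma rseq_0: "rseq 0"
  by (simp add: rseq_iff_power exI[of _ 0])

lemma rseq_Suc: "rseq (Suc n) \<longleftrightarrow> even n \<and> rseq (n div 2)"
proof -
  have "rseq (Suc n) \<longleftrightarrow> (\<exists>j. Suc (Suc n) = 2 * 2 ^ j)"
    unfolding rseq_iff_power
    by (metis One_nat_def Suc_inject nat.distinct(1) power.simps power_0 not0_implies_Suc)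
  also have "\<dots> \<longleftrightarrow> even n \<and> (\<exists>j. Suc (n div 2) = 2 ^ j)"
  proof -
    have "Suc (Suc n) = 2 * x \<longleftrightarrow> even n \<and> Suc (n div 2) = x" for x :: nat
      by presburger
    then show ?thesis by auto
  qed
  finally show ?thesis unfolding rseq_iff_power .
qed

definition rgf :: "bit fps" where
  "rgf = Abs_fps (\<lambda>i. of_bool (rseq i))"

lemma rgf_quadratic: "fps_X * rgf^2 + rgf + 1 = 0"
proof (rule fps_ext)
  fix n
  show "(fps_X * rgf^2 + rgf + 1) $ n = 0 $ n"
    by (cases n) (simp_all add: rgf_def rseq_0 rseq_Suc fps_bit_square_nth)
qed

section \<open>Pade approximants\<close>

fun pade_den :: "nat \<Rightarrow> bit fps" where
  "pade_den 0 = 1"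
| "pade_den (Suc 0) = 1 + fps_X"
| "pade_den (Suc (Suc k)) = pade_den (Suc k) + fps_X^2 * pade_den k"

fun pade_num :: "nat \<Rightarrow> bit fps" where
  "pade_num 0 = 0"
| "pade_num (Suc 0) = 1"
| "pade_num (Suc (Suc k)) = pade_num (Suc k) + fps_X^2 * pade_num k"

lemma pade_cross:
  "pade_den (Suc k) * pade_num k + pade_den k * pade_num (Suc k) = fps_X^(2*k)"
proof (induction k)
  case 0
  then show ?case by simp
next
  case (Suc k)
  have "pade_den (Suc (Suc k)) * pade_num (Suc k) + pade_den (Suc k) * pade_num (Suc (Suc k))
     = 2 * (pade_den (Suc k) * pade_num (Suc k))
       + fps_X^2 * (pade_den (Suc k) * pade_num k + pade_den k * pade_num (Suc k))"
    by (simp only: pade_den.simps pade_num.simps) algebra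
  also have "\<dots> = fps_X^(2 * Suc k)"
    using Suc by (simp add: power_add[symmetric])
  finally show ?case .
qed

lemma pade_norm:
  "fps_X * pade_num k ^ 2 + pade_den k * pade_num k + pade_den k ^ 2 = fps_X^(2*k)"
proof (induction k rule: pade_den.induct)
  case 1
  then show ?case by simp
next
  case 2
  have "fps_X * pade_num 1 ^ 2 + pade_den 1 * pade_num 1 + pade_den 1 ^ 2
      = 2 * (1 + 2 * fps_X) + (fps_X::bit fps)^2"
    by (simp only: One_nat_def pade_den.simps pade_num.simps power2_eq_square ring_distribs
        mult_1_left mult_1_right) algebra
  then show ?case by simp
next
  case (3 k)
  let ?P1 = "pade_den (Suc k)" and ?P0 = "pade_den k"
  let ?Q1 = "pade_num (Suc k)" and ?Q0 = "pade_num k"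
  let ?X = "fps_X :: bit fps"
  have "?X * pade_num (Suc (Suc k)) ^ 2 + pade_den (Suc (Suc k)) * pade_num (Suc (Suc k))
        + pade_den (Suc (Suc k)) ^ 2
      = (?X * ?Q1^2 + ?P1*?Q1 + ?P1^2) + ?X^4 * (?X * ?Q0^2 + ?P0*?Q0 + ?P0^2)
        + ?X^2 * (?P1 * ?Q0 + ?P0 * ?Q1) + 2 * (?X^3 * ?Q1 * ?Q0 + ?X^2 * ?P1 * ?P0)"
    by (simp only: pade_den.simps pade_num.simps) algebra
  also have "\<dots> = 2 * (?X^2 * ?X^(2*k)) + ?X^4 * ?X^(2*k)"
    using 3 pade_cross[of k] by (simp add: power_add[symmetric])
  also have "\<dots> = ?X^(4 + 2*k)"
    by (simp add: power_add)
  finally show ?case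
    by (simp add: numeral_eq_Suc)
qed

definition pade_err :: "nat \<Rightarrow> bit fps" where
  "pade_err k = pade_den k * rgf + pade_num k"

lemma pade_err_factor: "pade_err k * (fps_X * pade_err k + pade_den k) = fps_X^(2*k)"
proof -
  let ?P = "pade_den k" and ?Q = "pade_num k" and ?X = "fps_X :: bit fps"
  have "pade_err k * (fps_X * pade_err k + pade_den k)
     = (?X * ?Q^2 + ?P*?Q + ?P^2) + ?P^2 * (?X * rgf^2 + rgf + 1)
       + 2 * (?X * ?P * rgf * ?Q) - 2 * ?P^2"
    unfolding pade_err_def by algebra
  then show ?thesis by (simp add: rgf_quadratic pade_norm)
qed

lemma pade_den_nth_0 [simp]: "pade_den k $ 0 = 1"
  by (induction k rule: pade_den.induct) simp_all

lemma pade_den_nth_above: "k < j \<Longrightarrow> pade_den k $ j = 0"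
  by (induction k arbitrary: j rule: pade_den.induct) (simp_all add: fps_X_power_mult_nth)

lemma pade_num_nth_above: "k \<le> j \<Longrightarrow> pade_num k $ j = 0"
  by (induction k arbitrary: j rule: pade_num.induct) (simp_all add: fps_X_power_mult_nth)

lemma subdegree_pade_err: "subdegree (pade_err k) = 2*k" and pade_err_nonzero: "pade_err k \<noteq> 0"
proof -
  let ?U = "fps_X * pade_err k + pade_den k"
  show ne: "pade_err k \<noteq> 0"
    using pade_err_factor[of k] by auto
  have U0: "?U $ 0 \<noteq> 0" by simp
  have "?U \<noteq> 0" using U0 by (rule fps_nonzeroI)
  moreover have "subdegree ?U = 0" using U0 by (rule subdegree_eq_0)
  moreover have "subdegree (pade_err k * ?U) = 2*k"
    by (simp only: pade_err_factor) simp
  ultimately show "subdegree (pade_err k) = 2*k"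
    using ne by simp
qed

lemma pade_den_mult_rgf_nth:
  assumes "k \<le> t" "t \<le> 2*k"
  shows "(pade_den k * rgf) $ t = of_bool (t = 2*k)"
proof -
  have "(pade_den k * rgf) $ t = pade_err k $ t"
    using assms(1) by (simp add: pade_err_def pade_num_nth_above)
  moreover have "pade_err k $ t = 0" if "t < 2*k"
    using that subdegree_pade_err nth_less_subdegree_zero by metis
  moreover have "pade_err k $ (2*k) = 1"
    using nth_subdegree_nonzero[OF pade_err_nonzero] by (simp add: subdegree_pade_err)
  ultimately show ?thesis
    using assms(2) by (cases "t = 2*k") auto
qed

section \<open>Annihilating series\<close>

text \<open>\<open>C\<close> stands for the dehomogenisation \<open>\<theta>(1, X)\<close> of a form \<open>\<theta>\<close> of degree \<open>d\<close> in \<open>Lset\<close>.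
  The coefficient of \<open>x\<^sup>-\<^sup>(\<^sup>t\<^sup>-\<^sup>d\<^sup>) z\<^sup>-\<^sup>(\<^sup>n\<^sup>-\<^sup>t\<^sup>)\<close> in \<open>\<theta> \<circ> R\<^sup>(\<^sup>-\<^sup>n\<^sup>)\<close> is the \<open>t\<close>-th coefficient of \<open>C \<cdot> rgf\<close>
  (see \<open>act_homog_Rn_iff\<close>), so the last condition says \<open>\<theta> \<in> In n\<close>.\<close>
definition ann_series :: "nat \<Rightarrow> nat \<Rightarrow> bit fps \<Rightarrow> bool" where
  "ann_series n d C \<longleftrightarrow>
     C $ 0 = 1 \<and> (\<forall>j>d. C $ j = 0) \<and> (\<forall>t. d \<le> t \<and> t \<le> n \<longrightarrow> (C * rgf) $ t = 0)"

lemma ann_series_mono: "ann_series n d C \<Longrightarrow> m \<le> n \<Longrightarrow> ann_series m d C"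
  unfolding ann_series_def by auto

lemma not_ann_series_0: "\<not> ann_series n 0 C"
proof
  assume C: "ann_series n 0 C"
  then have "C = 1"
    by (intro fps_ext) (auto simp: ann_series_def elim: nat.exhaust_sel)
  then have "(C * rgf) $ 0 = 1"
    by (simp add: rgf_def rseq_0)
  with C show False
    unfolding ann_series_def by auto
qed

lemma ann_series_pade_den: "n < 2*k \<Longrightarrow> ann_series n k (pade_den k)"
  unfolding ann_series_def by (auto simp: pade_den_nth_above pade_den_mult_rgf_nth)

lemma ann_series_pade_den_even:
  "ann_series (2*m) (Suc m) (pade_den (Suc m) + fps_X * pade_den m)"
  unfolding ann_series_def
proof (intro conjI allI impI)
  show "(pade_den (Suc m) + fps_X * pade_den m) $ 0 = 1"
    by simp
next
  fix j
  assume "Suc m < j"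
  then show "(pade_den (Suc m) + fps_X * pade_den m) $ j = 0"
    by (cases j) (simp_all add: pade_den_nth_above)
next
  fix t
  assume t: "Suc m \<le> t \<and> t \<le> 2 * m"
  then obtain s where s: "t = Suc s"
    by (cases t) auto
  have "((pade_den (Suc m) + fps_X * pade_den m) * rgf) $ t
      = (pade_den (Suc m) * rgf) $ t + (pade_den m * rgf) $ s"
    using s by (simp add: distrib_right mult.assoc)
  then show "((pade_den (Suc m) + fps_X * pade_den m) * rgf) $ t = 0"
    using t s by (simp add: pade_den_mult_rgf_nth)
qed

lemma ann_series_div_X_power:
  assumes FE: "F = E * fps_X ^ j" and "E $ 0 = 1" and "j \<le> d" and "d \<le> n"
    and deg: "\<forall>k>d. F $ k = 0" and window: "\<forall>t. d \<le> t \<and> t \<le> n \<longrightarrow> (F * rgf) $ t = 0"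
  shows "ann_series (n - j) (d - j) E"
  unfolding ann_series_def
proof (intro conjI allI impI)
  fix k
  assume "d - j < k"
  then have "F $ (k + j) = 0"
    using deg \<open>j \<le> d\<close> by simp
  then show "E $ k = 0"
    unfolding FE by (simp add: mult.commute[of E] fps_X_power_mult_nth)
next
  fix s
  assume "d - j \<le> s \<and> s \<le> n - j"
  then have "d \<le> s + j" "s + j \<le> n"
    using \<open>j \<le> d\<close> \<open>d \<le> n\<close> by auto
  then have "(F * rgf) $ (s + j) = 0"
    using window by blast
  moreover have "(F * rgf) $ (s + j) = (fps_X ^ j * (E * rgf)) $ (s + j)"
    unfolding FE by (simp add: mult_ac)
  ultimately show "(E * rgf) $ s = 0"
    by (simp add: fps_X_power_mult_nth)
qed (fact \<open>E $ 0 = 1\<close>)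

lemma ann_series_diff_shift:
  assumes C: "ann_series n d C" and C': "ann_series n d C'" and "C \<noteq> C'" and "d \<le> n"
  obtains j E where "1 \<le> j" "j \<le> d" "ann_series (n - j) (d - j) E" "C - C' = E * fps_X ^ j"
proof -
  define F where "F = C - C'"
  define j where "j = subdegree F"
  have "F \<noteq> 0"
    using \<open>C \<noteq> C'\<close> unfolding F_def by simp
  then have Fj: "F $ j \<noteq> 0"
    unfolding j_def by simp
  have deg: "\<forall>k>d. F $ k = 0" and window: "\<forall>t. d \<le> t \<and> t \<le> n \<longrightarrow> (F * rgf) $ t = 0"
    using C C' unfolding F_def ann_series_def by (simp_all add: left_diff_distrib)
  have "F $ 0 = 0"
    using C C' unfolding F_def ann_series_def by simp
  then have "1 \<le> j"
    using Fj by (cases j) auto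
  moreover have "j \<le> d"
    using deg Fj not_le by blast
  moreover have FE: "F = fps_shift j F * fps_X ^ j"
    unfolding j_def by (simp add: fps_shift_times_fps_X_power)
  moreover have "fps_shift j F $ 0 = 1"
    using Fj by simp
  ultimately show ?thesis
    using that ann_series_div_X_power[OF FE _ _ \<open>d \<le> n\<close> deg window] unfolding F_def by blast
qed

lemma ann_series_odd_eq_pade_den:
  assumes C: "ann_series (2*m+1) (Suc m) C"
    and bound: "\<And>n' d' C'. n' < 2*m+1 \<Longrightarrow> ann_series n' d' C' \<Longrightarrow> n' div 2 + 1 \<le> d'"
  shows "C = pade_den (Suc m)"
proof (rule ccontr)
  assume ne: "C \<noteq> pade_den (Suc m)"
  obtain j E where j: "1 \<le> j" "j \<le> Suc m" and E: "ann_series (2*m+1 - j) (Suc m - j) E"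
    by (rule ann_series_diff_shift[OF C ann_series_pade_den ne]) auto
  have "(2*m+1 - j) div 2 + 1 \<le> Suc m - j"
    using bound[OF _ E] j by simp
  with j show False
    by presburger
qed

lemma ann_series_degree_bound: "ann_series n d C \<Longrightarrow> n div 2 + 1 \<le> d"
proof (induction n arbitrary: d C rule: less_induct)
  case (less n)
  show ?case
  proof (cases n)
    case 0
    then show ?thesis
      using less.prems not_ann_series_0 by (cases d) auto
  next
    case (Suc n')
    have IH: "n' div 2 + 1 \<le> d"
      using less.IH[of n' d C] ann_series_mono[OF less.prems, of n'] Suc by simp
    show ?thesis
    proof (cases "even n'")
      case True
      with IH Suc show ?thesis
        by simp
    next
      case False
      then obtain m where m: "n' = 2*m+1"
        by (rule oddE)
      have "d \<noteq> m + 1"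
      proof
        assume d: "d = m + 1"
        have "C = pade_den (Suc m)"
        proof (rule ann_series_odd_eq_pade_den)
          show "ann_series (2*m+1) (Suc m) C"
            using ann_series_mono[OF less.prems] Suc m d by simp
          show "n'' div 2 + 1 \<le> d'" if "n'' < 2*m+1" "ann_series n'' d' C'" for n'' d' C'
            using that Suc m by (intro less.IH) auto
        qed
        then have "(C * rgf) $ (2 * Suc m) = 1"
          by (simp add: pade_den_mult_rgf_nth)
        moreover have "(C * rgf) $ (2 * Suc m) = 0"
          using less.prems d Suc m unfolding ann_series_def by auto
        ultimately show False
          by simp
      qed
      with IH Suc m show ?thesis
        by simp
    qed
  qed
qed

lemma ann_series_odd_iff: "ann_series (2*m+1) (Suc m) C \<longleftrightarrow> C = pade_den (Suc m)"
  using ann_series_odd_eq_pade_den ann_series_degree_bound ann_series_pade_den by auto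

lemma ann_series_even_iff:
  "ann_series (2*m) (Suc m) C \<longleftrightarrow> C = pade_den (Suc m) \<or> C = pade_den (Suc m) + fps_X * pade_den m"
proof
  assume C: "ann_series (2*m) (Suc m) C"
  show "C = pade_den (Suc m) \<or> C = pade_den (Suc m) + fps_X * pade_den m"
  proof (cases m)
    case 0
    have "C $ k = (1 + fps_const (C $ 1) * fps_X) $ k" for k
      using C 0 unfolding ann_series_def by (cases "k = 0"; cases "k = 1") auto
    then have "C = 1 + fps_const (C $ 1) * fps_X"
      by (rule fps_ext)
    then show ?thesis
      using 0 by (cases "C $ 1") (simp_all add: add.assoc)
  next
    case (Suc m')
    show ?thesis
    proof (rule ccontr)
      assume ne: "\<not> ?thesis"
      obtain j E where j: "1 \<le> j" "j \<le> Suc m" and E: "ann_series (2*m - j) (Suc m - j) E"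
        and CE: "C - pade_den (Suc m) = E * fps_X ^ j"
        by (rule ann_series_diff_shift[OF C ann_series_pade_den]) (use ne Suc in auto)
      have "(2*m - j) div 2 + 1 \<le> Suc m - j"
        using ann_series_degree_bound[OF E] .
      then have "j = 1"
        using j Suc by presburger
      then have "E = pade_den m"
        using E Suc ann_series_odd_iff by (simp add: mult_2)
      with CE \<open>j = 1\<close> ne show False
        by (simp add: algebra_simps)
    qed
  qed
next
  assume "C = pade_den (Suc m) \<or> C = pade_den (Suc m) + fps_X * pade_den m"
  then show "ann_series (2*m) (Suc m) C"
    using ann_series_pade_den ann_series_pade_den_even by auto
qed

section \<open>Forms as homogenised series\<close>

definition homog :: "nat \<Rightarrow> bit fps \<Rightarrow> poly2" where
  "homog d C = {(p, q). p + q = d \<and> C $ q = 1}"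

lemma finite_homog: "finite (homog d C)"
  by (rule finite_subset[of _ "{..d} \<times> {..d}"]) (auto simp: homog_def)

lemma is_form_homog: "is_form (homog d C)"
  unfolding is_form_def using finite_homog by (auto simp: homog_def)

lemma tdeg_eqI:
  assumes "x \<in> A" and "\<forall>(p, q)\<in>A. p + q = d"
  shows "tdeg A = d"
proof -
  have "(\<lambda>(p, q). p + q) ` A = {d}"
    using assms by fastforce
  then show ?thesis
    by (simp add: tdeg_def)
qed

lemma is_form_tdeg:
  assumes "is_form A" and "(p, q) \<in> A"
  shows "p + q = tdeg A"
proof -
  obtain d where "\<forall>(p, q)\<in>A. p + q = d"
    using assms(1) unfolding is_form_def by blast
  with tdeg_eqI[OF assms(2) this] assms(2) show ?thesis
    by auto
qed

lemma tdeg_homog: "C $ q = 1 \<Longrightarrow> q \<le> d \<Longrightarrow> tdeg (homog d C) = d"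
  by (rule tdeg_eqI[of "(d - q, q)"]) (auto simp: homog_def)

lemma mem_Rn_iff: "(i, k) \<in> Rn n \<longleftrightarrow> i \<le> n \<and> k = n - i \<and> rseq i"
  by (auto simp: Rn_def)

lemma tdeg_Rn: "tdeg (Rn n) = n"
  by (rule tdeg_eqI[of "(0, n)"]) (auto simp: mem_Rn_iff rseq_0)

lemma padd_homog: "padd (homog d A) (homog d B) = homog d (A + B)"
  unfolding padd_def homog_def by auto

lemma xshift_homog:
  assumes "\<forall>j>d. C $ j = 0"
  shows "xshift a (homog d C) = homog (d + a) C"
proof (intro set_eqI iffI)
  fix x
  assume "x \<in> homog (d + a) C"
  then obtain p q where "x = (p, q)" "p + q = d + a" "C $ q = 1"
    by (auto simp: homog_def)
  moreover from assms this(3) have "q \<le> d"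
    by (metis not_le zero_neq_one)
  ultimately show "x \<in> xshift a (homog d C)"
    unfolding xshift_def homog_def by (auto intro!: image_eqI[of _ _ "(p - a, q)"])
qed (auto simp: xshift_def homog_def)

lemma zshift_homog: "zshift 1 (homog d C) = homog (Suc d) (fps_X * C)"
proof (intro set_eqI iffI)
  fix x
  assume "x \<in> homog (Suc d) (fps_X * C)"
  then obtain p y where "x = (p, y)" "p + y = Suc d" "y \<noteq> 0" "C $ (y - 1) = 1"
    by (auto simp: homog_def split: if_splits)
  then show "x \<in> zshift 1 (homog d C)"
    unfolding zshift_def homog_def by (auto intro!: image_eqI[of _ _ "(p, y - 1)"])
qed (auto simp: zshift_def homog_def)

definition conv_support :: "nat \<Rightarrow> bit fps \<Rightarrow> nat \<Rightarrow> nat set" where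
  "conv_support d C t = {j. j \<le> d \<and> C $ j = 1 \<and> rseq (t - j)}"

lemma mult_rgf_nth_eq_1_iff:
  assumes deg: "\<forall>j>d. C $ j = 0" and "d \<le> t"
  shows "(C * rgf) $ t = 1 \<longleftrightarrow> odd (card (conv_support d C t))"
proof -
  have "(C * rgf) $ t = (\<Sum>i\<in>{0..t}. of_bool (i \<in> conv_support d C t))"
    unfolding fps_mult_nth
  proof (rule sum.cong)
    fix i
    assume "i \<in> {0..t}"
    show "C $ i * rgf $ (t - i) = of_bool (i \<in> conv_support d C t)"
      using deg by (cases "C $ i") (auto simp: conv_support_def rgf_def not_le)
  qed simp
  also have "\<dots> = of_nat (card (conv_support d C t))"
    using \<open>d \<le> t\<close> by (simp add: Int_absorb1 conv_support_def subset_iff)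
  finally show ?thesis
    by (simp add: of_nat_bit_eq_1_iff)
qed

lemma act_homog_Rn_iff:
  assumes deg: "\<forall>j>d. C $ j = 0"
  shows "(a, b) \<in> act (homog d C) (Rn n) \<longleftrightarrow> a + b + d = n \<and> (C * rgf) $ (a + d) = 1"
proof -
  let ?S = "{(m, w) \<in> homog d C \<times> Rn n.
      fst m \<le> fst w \<and> snd m \<le> snd w \<and> fst w - fst m = a \<and> snd w - snd m = b}"
  let ?f = "\<lambda>j. ((d - j, j), (a + d - j, n - (a + d - j)))"
  have S: "?S = ?f ` {j \<in> conv_support d C (a + d). a + b + d = n}"
  proof (intro set_eqI iffI)
    fix x
    assume "x \<in> ?S"
    then obtain p q i where x: "x = ((p, q), (i, n - i))" and
      "p + q = d" "C $ q = 1" "i \<le> n" "rseq i" "p \<le> i" "q \<le> n - i" "i - p = a" "n - i - q = b"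
      by (auto simp: homog_def mem_Rn_iff)
    moreover from this have "i = a + d - q" "a + b + d = n"
      by auto
    ultimately show "x \<in> ?f ` {j \<in> conv_support d C (a + d). a + b + d = n}"
      by (auto simp: conv_support_def intro!: image_eqI[of _ _ q])
  next
    fix x
    assume "x \<in> ?f ` {j \<in> conv_support d C (a + d). a + b + d = n}"
    then obtain j where "x = ?f j" "j \<le> d" "C $ j = 1" "rseq (a + d - j)" "a + b + d = n"
      by (auto simp: conv_support_def)
    then show "x \<in> ?S"
      by (simp add: homog_def mem_Rn_iff) arith
  qed
  have "card ?S = (if a + b + d = n then card (conv_support d C (a + d)) else 0)"
    unfolding S by (simp add: card_image inj_on_def)
  then show ?thesis
    using mult_rgf_nth_eq_1_iff[OF deg, of "a + d"] by (simp add: act_def)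
qed

lemma Delta_homog_Rn_iff:
  assumes "C $ 0 = 1" and deg: "\<forall>j>d. C $ j = 0" and "d \<le> N"
  shows "Delta (homog d C) (Rn N) \<longleftrightarrow> (C * rgf) $ N = 1"
proof -
  have "{(m, w) \<in> homog d C \<times> Rn N.
          int (fst m) - int (fst w) = int d - int N \<and> int (snd m) - int (snd w) = 0}
      = {(m, w) \<in> homog d C \<times> Rn N.
          fst m \<le> fst w \<and> snd m \<le> snd w \<and> fst w - fst m = N - d \<and> snd w - snd m = 0}"
    using \<open>d \<le> N\<close> by (auto simp: homog_def mem_Rn_iff)
  then have "Delta (homog d C) (Rn N) \<longleftrightarrow> (N - d, 0) \<in> act (homog d C) (Rn N)"
    using assms tdeg_homog[of C 0 d]
    by (simp add: Delta_def laurent_coeff_def act_def tdeg_Rn)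
  then show ?thesis
    using act_homog_Rn_iff[OF deg] \<open>d \<le> N\<close> by simp
qed

lemma homog_in_In_iff:
  assumes deg: "\<forall>j>d. C $ j = 0"
  shows "homog d C \<in> In n \<longleftrightarrow> (\<forall>t. d \<le> t \<and> t \<le> n \<longrightarrow> (C * rgf) $ t = 0)"
proof -
  have "homog d C \<in> In n \<longleftrightarrow> (\<forall>a b. (a, b) \<notin> act (homog d C) (Rn n))"
    using finite_homog by (auto simp: In_def annih_def)
  also have "\<dots> \<longleftrightarrow> (\<forall>a b. \<not> (a + b + d = n \<and> (C * rgf) $ (a + d) = 1))"
    by (simp only: act_homog_Rn_iff[OF deg])
  also have "\<dots> \<longleftrightarrow> (\<forall>t. d \<le> t \<and> t \<le> n \<longrightarrow> (C * rgf) $ t \<noteq> 1)"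
  proof safe
    fix t
    assume "\<forall>a b. \<not> (a + b + d = n \<and> (C * rgf) $ (a + d) = 1)" "d \<le> t" "t \<le> n"
      "(C * rgf) $ t = 1"
    then have "\<not> ((t - d) + (n - t) + d = n \<and> (C * rgf) $ ((t - d) + d) = 1)"
      by blast
    with \<open>d \<le> t\<close> \<open>t \<le> n\<close> \<open>(C * rgf) $ t = 1\<close> show False
      by simp
  qed auto
  finally show ?thesis
    by simp
qed

lemma homog_ann_series:
  assumes "ann_series n d C"
  shows "homog d C \<in> In n \<inter> Lset" and "tdeg (homog d C) = d"
proof -
  have "C $ 0 = 1" and deg: "\<forall>j>d. C $ j = 0"
    using assms by (auto simp: ann_series_def)
  then show td: "tdeg (homog d C) = d"
    using tdeg_homog[of C 0 d] by simp
  have "(d, 0) \<in> homog d C"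
    using \<open>C $ 0 = 1\<close> by (simp add: homog_def)
  with td assms show "homog d C \<in> In n \<inter> Lset"
    using is_form_homog homog_in_In_iff[OF deg] by (auto simp: ann_series_def Lset_def)
qed

definition dehom :: "poly2 \<Rightarrow> bit fps" where
  "dehom \<theta> = Abs_fps (\<lambda>j. of_bool ((tdeg \<theta> - j, j) \<in> \<theta>))"

lemma homog_dehom:
  assumes "is_form \<theta>"
  shows "homog (tdeg \<theta>) (dehom \<theta>) = \<theta>"
proof (intro set_eqI)
  fix x :: "nat \<times> nat"
  obtain p q where x: "x = (p, q)"
    by (cases x)
  have "(p, q) \<in> \<theta> \<longleftrightarrow> p + q = tdeg \<theta> \<and> (tdeg \<theta> - q, q) \<in> \<theta>"
  proof (cases "p + q = tdeg \<theta>")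
    case True
    then have "tdeg \<theta> - q = p"
      by linarith
    with True show ?thesis
      by simp
  qed (use is_form_tdeg[OF assms] in blast)
  then show "x \<in> homog (tdeg \<theta>) (dehom \<theta>) \<longleftrightarrow> x \<in> \<theta>"
    unfolding x by (simp add: homog_def dehom_def)
qed

lemma dehom_nth_above: "is_form \<theta> \<Longrightarrow> tdeg \<theta> < j \<Longrightarrow> dehom \<theta> $ j = 0"
  by (auto simp: dehom_def dest: is_form_tdeg[of \<theta>])

lemma In_Lset_ann_series:
  assumes "\<theta> \<in> In n \<inter> Lset"
  shows "ann_series n (tdeg \<theta>) (dehom \<theta>)"
proof -
  have form: "is_form \<theta>" "(tdeg \<theta>, 0) \<in> \<theta>"
    using assms by (auto simp: Lset_def)
  have deg: "\<forall>j>tdeg \<theta>. dehom \<theta> $ j = 0"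
    using dehom_nth_above form(1) by blast
  have "homog (tdeg \<theta>) (dehom \<theta>) \<in> In n"
    using assms homog_dehom form(1) by simp
  then show ?thesis
    using homog_in_In_iff[OF deg] deg form(2) by (simp add: ann_series_def dehom_def)
qed

section \<open>The recursion\<close>

lemma fg_even_step:
  assumes "fg (2*m) = (homog (Suc m) (pade_den (Suc m)), g)"
  shows "fg (Suc (2*m)) = (homog (Suc m) (pade_den (Suc m)), zshift 1 g)"
proof -
  have "\<not> Delta (homog (Suc m) (pade_den (Suc m))) (Rn (Suc (2*m)))"
    by (simp add: Delta_homog_Rn_iff pade_den_nth_above pade_den_mult_rgf_nth)
  with assms show ?thesis
    by (simp add: Let_def)
qed

lemma fg_odd_step:
  assumes "fg (Suc (2*m)) = (homog (Suc m) (pade_den (Suc m)), homog (Suc (Suc m)) (fps_X^2 * pade_den m))"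
  shows "fg (Suc (Suc (2*m)))
    = (homog (Suc (Suc m)) (pade_den (Suc (Suc m))), homog (Suc (Suc m)) (fps_X * pade_den (Suc m)))"
proof -
  have "Delta (homog (Suc m) (pade_den (Suc m))) (Rn (Suc (Suc (2*m))))"
    using pade_den_mult_rgf_nth[of "Suc m" "Suc (Suc (2*m))"]
    by (simp add: Delta_homog_Rn_iff pade_den_nth_above)
  moreover have "tdeg (homog (Suc m) (pade_den (Suc m))) = Suc m"
    by (simp add: tdeg_homog[of _ 0])
  moreover have "tdeg (homog (Suc (Suc m)) (fps_X^2 * pade_den m)) = Suc (Suc m)"
    by (rule tdeg_homog[of _ 2]) (simp_all add: fps_X_power_mult_nth)
  moreover have "xshift 1 (homog (Suc m) (pade_den (Suc m))) = homog (Suc (Suc m)) (pade_den (Suc m))"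
    by (simp add: xshift_homog pade_den_nth_above)
  moreover have "zshift 1 (homog (Suc m) (pade_den (Suc m))) = homog (Suc (Suc m)) (fps_X * pade_den (Suc m))"
    by (rule zshift_homog)
  ultimately show ?thesis
    using assms by (subst fg.simps) (simp add: Let_def padd_homog del: fg.simps)
qed

lemma fg_homog_pade_den:
  "fg (2*m) = (homog (Suc m) (pade_den (Suc m)), homog (Suc m) (fps_X * pade_den m)) \<and>
   fg (Suc (2*m)) = (homog (Suc m) (pade_den (Suc m)), homog (Suc (Suc m)) (fps_X^2 * pade_den m))"
proof (induction m)
  case 0
  have f0: "fg (2*0) = (homog (Suc 0) (pade_den (Suc 0)), homog (Suc 0) (fps_X * pade_den 0))"
    by (auto simp: homog_def)
  have "zshift 1 (homog (Suc 0) (fps_X * pade_den 0)) = homog (Suc (Suc 0)) (fps_X^2 * pade_den 0)"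
    unfolding zshift_homog by (simp add: power2_eq_square)
  with f0 fg_even_step[OF f0] show ?case
    by (simp del: fg.simps)
next
  case (Suc m)
  then have f: "fg (2 * Suc m)
      = (homog (Suc (Suc m)) (pade_den (Suc (Suc m))), homog (Suc (Suc m)) (fps_X * pade_den (Suc m)))"
    using fg_odd_step by (simp del: fg.simps)
  have "zshift 1 (homog (Suc (Suc m)) (fps_X * pade_den (Suc m)))
      = homog (Suc (Suc (Suc m))) (fps_X^2 * pade_den (Suc m))"
    unfolding zshift_homog by (simp add: power2_eq_square mult.assoc)
  with f fg_even_step[OF f] show ?case
    by (simp del: fg.simps)
qed

section \<open>Minimal annihilators\<close>

lemma Theta_eq_homog_ann_series:
  "Theta n = homog (Suc (n div 2)) ` {C. ann_series n (Suc (n div 2)) C}"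
proof -
  let ?D = "Suc (n div 2)"
  have min: "?D \<le> tdeg \<theta>" if "\<theta> \<in> In n \<inter> Lset" for \<theta>
    using ann_series_degree_bound[OF In_Lset_ann_series[OF that]] by simp
  have "ann_series n ?D (pade_den ?D)"
    by (rule ann_series_pade_den) simp
  then have witness: "homog ?D (pade_den ?D) \<in> In n \<inter> Lset" "tdeg (homog ?D (pade_den ?D)) = ?D"
    by (rule homog_ann_series)+
  show ?thesis
  proof (intro set_eqI iffI)
    fix \<theta>
    assume "\<theta> \<in> Theta n"
    then have \<theta>: "\<theta> \<in> In n \<inter> Lset" and "tdeg \<theta> \<le> tdeg (homog ?D (pade_den ?D))"
      using witness(1) unfolding Theta_def by blast+
    with min[OF \<theta>] witness(2) have "tdeg \<theta> = ?D"
      by simp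
    moreover have "homog (tdeg \<theta>) (dehom \<theta>) = \<theta>"
      using \<theta> by (simp add: homog_dehom Lset_def)
    ultimately show "\<theta> \<in> homog ?D ` {C. ann_series n ?D C}"
      using In_Lset_ann_series[OF \<theta>] by (metis image_eqI mem_Collect_eq)
  next
    fix \<theta>
    assume "\<theta> \<in> homog ?D ` {C. ann_series n ?D C}"
    then show "\<theta> \<in> Theta n"
      using homog_ann_series min unfolding Theta_def by fastforce
  qed
qed

theorem corollary4:
  fixes n :: nat
  shows "Theta n = (if odd n then {fst (fg n)}
                    else {fst (fg n), padd (fst (fg n)) (snd (fg n))})"
proof (cases "odd n")
  case True
  then obtain m where n: "n = 2*m + 1"
    by (rule oddE)
  then have "{C. ann_series n (Suc m) C} = {pade_den (Suc m)}"
    using ann_series_odd_iff by auto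
  then have "Theta n = {homog (Suc m) (pade_den (Suc m))}"
    unfolding Theta_eq_homog_ann_series using n by simp
  with n True show ?thesis
    using fg_homog_pade_den[of m] by (simp del: fg.simps)
next
  case False
  then obtain m where n: "n = 2*m"
    by (metis evenE)
  then have "{C. ann_series n (Suc m) C} = {pade_den (Suc m), pade_den (Suc m) + fps_X * pade_den m}"
    using ann_series_even_iff by auto
  then have "Theta n = {homog (Suc m) (pade_den (Suc m)),
      homog (Suc m) (pade_den (Suc m) + fps_X * pade_den m)}"
    unfolding Theta_eq_homog_ann_series using n by simp
  with n False show ?thesis
    using fg_homog_pade_den[of m] by (simp add: padd_homog del: fg.simps)
qed

end
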